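(* Let $N\ge M\ge1$, let $(w_1,\dots,w_N)$ be a (generic) alphabet and let $y=(y_1,\dots,y_M)\in\mathbb{Z}^M$ be any collection of integers. Then for every $k\in\{1,\dots,N\}$, \[\mathcal{F}_y(w_1,\dots,w_N)\big|_{w_k=0}=\alpha\,\mathcal{F}_y(w_1,\dots,w_{k-1},w_{k+1},\dots,w_N).\]
   Context: $q>0$, $q\ne1$, $\alpha\ge0$. $\mathcal{B}_N$ is the group of signed permutations of $\{1,\dots,N\}$ acting by $\sigma(f(w_1,\dots,w_N))=f(w_{\sigma(1)},\dots,w_{\sigma(N)})$ with $w_{-k}:=1/(qw_k)$. With $V_k=\frac{q^{\binom{k}{2}}(1-q)^k}{\prod_{i=1}^k(1-q^i)(1+q^{i-1})}$ and $\varphi_y(w)=\frac{1-q-\alpha+\alpha w}{1-qw^2}\frac{(1-q)w}{1-w}\left(\frac{1-qw}{1-w}\right)^{y-1}$, for an alphabet of length $n\ge M$, \[\mathcal{F}_y(w_1,\dots,w_n)=V_{n-M}\alpha^{n-M}\sum_{\sigma\in\mathcal{B}_n}\sigma\!\left(\prod_{1\le i<j\le n}\left[\frac{w_i-qw_j}{w_i-w_j}\frac{1-w_iw_j}{1-qw_iw_j}\right]\prod_{i=1}^M\varphi_{y_i}(w_i)\right),\] and $\mathcal{F}_y(w_1,\dots,w_n):=0$ if $n<M$. *)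

theory Defs
  imports "HOL-Analysis.Analysis"
begin

text \<open>Alphabets are functions w :: nat => complex, used on the indices 1..n.
  Signed letters: w_{-j} = 1/(q w_j).\<close>

definition sletter :: "real \<Rightarrow> (nat \<Rightarrow> complex) \<Rightarrow> int \<Rightarrow> complex" where
  "sletter q w j = (if j > 0 then w (nat j) else 1 / (of_real q * w (nat (- j))))"

text \<open>The hyperoctahedral group B_n of signed permutations of {1..n}; a signed
  permutation sigma (with sigma(-i) = -sigma(i)) is determined by its values on 1..n,
  and we store it extensionally (value 0 outside 1..n).\<close>

definition signed_perms :: "nat \<Rightarrow> (nat \<Rightarrow> int) set" where
  "signed_perms n = {\<sigma>. (\<forall>i\<in>{1..n}. \<sigma> i \<noteq> 0 \<and> \<bar>\<sigma> i\<bar> \<le> int n)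
                       \<and> inj_on (\<lambda>i. \<bar>\<sigma> i\<bar>) {1..n}
                       \<and> (\<forall>i. i \<notin> {1..n} \<longrightarrow> \<sigma> i = 0)}"

text \<open>Action sigma(f)(w_1..w_n) = f(w_{sigma(1)},...,w_{sigma(n)}).\<close>

definition act_alphabet :: "real \<Rightarrow> (nat \<Rightarrow> int) \<Rightarrow> (nat \<Rightarrow> complex) \<Rightarrow> nat \<Rightarrow> complex" where
  "act_alphabet q \<sigma> w i = sletter q w (\<sigma> i)"

definition Vq :: "real \<Rightarrow> nat \<Rightarrow> real" where
  "Vq q k = q ^ (k choose 2) * (1 - q) ^ k /
            (\<Prod>i=1..k. (1 - q ^ i) * (1 + q ^ (i - 1)))"

definition phi :: "real \<Rightarrow> real \<Rightarrow> int \<Rightarrow> complex \<Rightarrow> complex" where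
  "phi q \<alpha> y w =
     (1 - of_real q - of_real \<alpha> + of_real \<alpha> * w) / (1 - of_real q * w ^ 2)
     * ((1 - of_real q) * w / (1 - w))
     * ((1 - of_real q * w) / (1 - w)) powi (y - 1)"

definition Fterm :: "real \<Rightarrow> real \<Rightarrow> nat \<Rightarrow> (nat \<Rightarrow> int) \<Rightarrow> nat \<Rightarrow> (nat \<Rightarrow> complex) \<Rightarrow> complex" where
  "Fterm q \<alpha> M y n u =
     (\<Prod>(i, j) \<in> {(i, j). 1 \<le> i \<and> i < j \<and> j \<le> n}.
         (u i - of_real q * u j) / (u i - u j) * ((1 - u i * u j) / (1 - of_real q * u i * u j)))
     * (\<Prod>i=1..M. phi q \<alpha> (y i) (u i))"

text \<open>F_y(w_1,...,w_n); y is indexed by 1..M.\<close>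

definition Fy :: "real \<Rightarrow> real \<Rightarrow> nat \<Rightarrow> (nat \<Rightarrow> int) \<Rightarrow> nat \<Rightarrow> (nat \<Rightarrow> complex) \<Rightarrow> complex" where
  "Fy q \<alpha> M y n w =
     (if n < M then 0
      else of_real (Vq q (n - M) * \<alpha> ^ (n - M))
           * (\<Sum>\<sigma>\<in>signed_perms n. Fterm q \<alpha> M y n (act_alphabet q \<sigma> w)))"

definition remove_letter :: "nat \<Rightarrow> (nat \<Rightarrow> complex) \<Rightarrow> nat \<Rightarrow> complex" where
  "remove_letter k w i = (if i < k then w i else w (i + 1))"

text \<open>Genericity of an alphabet w_1..w_n: every factor appearing in (a numerator or
  denominator of) the symmetrized formula is nonzero.\<close>

definition generic_alphabet :: "real \<Rightarrow> nat \<Rightarrow> (nat \<Rightarrow> complex) \<Rightarrow> bool" where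
  "generic_alphabet q n w \<longleftrightarrow>
     (\<forall>i\<in>{1..n}. w i \<noteq> 0) \<and>
     (\<forall>a b. a \<noteq> 0 \<and> b \<noteq> 0 \<and> \<bar>a\<bar> \<le> int n \<and> \<bar>b\<bar> \<le> int n \<longrightarrow>
        (\<bar>a\<bar> \<noteq> \<bar>b\<bar> \<longrightarrow> sletter q w a \<noteq> sletter q w b
                          \<and> of_real q * sletter q w a * sletter q w b \<noteq> 1
                          \<and> sletter q w a * sletter q w b \<noteq> 1
                          \<and> sletter q w a \<noteq> of_real q * sletter q w b) \<and>
        sletter q w a \<noteq> 1 \<and> of_real q * sletter q w a \<noteq> 1 \<and>
        of_real q * (sletter q w a) ^ 2 \<noteq> 1)"

end

theory Submission
  imports Defs
begin

text \<open>Split the sum over \<open>B\<^sub>N\<close> according to the position \<open>p\<close> at which \<open>\<sigma>\<close> puts \<open>\<plusminus>k\<close>;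
  what remains is a signed permutation \<open>\<tau>\<close> of the other \<open>N - 1\<close> letters. As \<open>w\<^sub>k \<rightarrow> 0\<close> the
  inserted letter tends to \<open>0\<close> (sign \<open>+\<close>) or to \<open>\<infinity>\<close> (sign \<open>-\<close>, because
  \<open>w_{-k} = 1/(q w\<^sub>k)\<close>). In both limits a pair factor with the inserted letter second tends
  to \<open>1\<close>, one with it first tends to \<open>q\<close> resp. \<open>1/q\<close>, and its \<open>\<phi>\<close>-factor tends to \<open>0\<close>.
  Hence only the positions \<open>p > M\<close> survive, each contributing \<open>q^(N-p) + q^(p-N)\<close> times the
  term of \<open>\<tau>\<close>. Summing over \<open>p\<close> gives \<open>\<Sum>_{m<N-M} (q^m + q^-m)\<close>, and the identity
  \<open>V_{K+1} \<Sum>_{m\<le>K} (q^m + q^-m) = V_K\<close> turns the prefactor \<open>V_{N-M} \<alpha>^(N-M)\<close> into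
  \<open>\<alpha> V_{N-1-M} \<alpha>^(N-1-M)\<close>.\<close>

section \<open>Inserting an entry and renumbering signed indices\<close>

definition insert_at :: "nat \<Rightarrow> 'a \<Rightarrow> (nat \<Rightarrow> 'a) \<Rightarrow> nat \<Rightarrow> 'a" where
  "insert_at p x u j = (if j < p then u j else if j = p then x else u (j - 1))"

definition shift_from :: "nat \<Rightarrow> nat \<Rightarrow> nat" where
  "shift_from p i = (if i < p then i else Suc i)"

lemma insert_at_shift_from [simp]: "insert_at p x u (shift_from p i) = u i"
  by (simp add: insert_at_def shift_from_def)

lemma insert_at_self [simp]: "insert_at p x u p = x"
  by (simp add: insert_at_def)

lemma insert_at_neq: "i \<noteq> p \<Longrightarrow> insert_at p x u i = insert_at p x' u i"
  by (simp add: insert_at_def)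

lemma shift_from_neq [simp]: "shift_from p i \<noteq> p"
  by (simp add: shift_from_def)

lemma inj_shift_from: "inj (shift_from p)"
  by (auto simp: inj_def shift_from_def split: if_splits)

lemma atLeastAtMost_Suc_shift_from:
  assumes "p \<in> {1..Suc n}"
  shows "{1..Suc n} = insert p (shift_from p ` {1..n})"
proof -
  have "j \<in> shift_from p ` {1..n}" if "j \<in> {1..Suc n}" "j \<noteq> p" for j
    using that assms by (intro image_eqI[of _ _ "if j < p then j else j - 1"]) (auto simp: shift_from_def)
  moreover have "shift_from p ` {1..n} \<subseteq> {1..Suc n}"
    by (auto simp: shift_from_def)
  ultimately show ?thesis using assms by blast
qed

lemma insert_at_shift_from_eq:
  assumes "\<And>i. v (shift_from p i) = u i"
  shows "insert_at p (v p) u = v"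
proof
  fix j
  show "insert_at p (v p) u j = v j"
    using assms[of j] assms[of "j - 1"] by (cases j) (auto simp: insert_at_def shift_from_def)
qed

definition skip_index :: "nat \<Rightarrow> int \<Rightarrow> int" where
  "skip_index k t = (if \<bar>t\<bar> < int k then t else t + sgn t)"

definition unskip_index :: "nat \<Rightarrow> int \<Rightarrow> int" where
  "unskip_index k t = (if \<bar>t\<bar> < int k then t else t - sgn t)"

lemma unskip_skip_index [simp]: "unskip_index k (skip_index k t) = t"
  by (auto simp: skip_index_def unskip_index_def sgn_if abs_if)

lemma skip_unskip_index: "1 \<le> k \<Longrightarrow> \<bar>t\<bar> \<noteq> int k \<Longrightarrow> skip_index k (unskip_index k t) = t"
  by (auto simp: skip_index_def unskip_index_def sgn_if abs_if)

lemma abs_skip_index_neq: "1 \<le> k \<Longrightarrow> \<bar>skip_index k t\<bar> \<noteq> int k"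
  by (auto simp: skip_index_def sgn_if abs_if)

lemma abs_skip_index: "1 \<le> k \<Longrightarrow> \<bar>skip_index k t\<bar> = (if \<bar>t\<bar> < int k then \<bar>t\<bar> else \<bar>t\<bar> + 1)"
  by (auto simp: skip_index_def sgn_if abs_if)

lemma abs_unskip_index: "1 \<le> k \<Longrightarrow> \<bar>unskip_index k t\<bar> = (if \<bar>t\<bar> < int k then \<bar>t\<bar> else \<bar>t\<bar> - 1)"
  by (auto simp: unskip_index_def sgn_if abs_if)

lemma skip_index_eq_0_iff [simp]: "skip_index k t = 0 \<longleftrightarrow> t = 0"
  by (auto simp: skip_index_def sgn_if)

lemma sletter_skip_index:
  assumes "1 \<le> k"
  shows "sletter q (w(k := z)) (skip_index k t) = sletter q (remove_letter k w) t"
proof (cases "\<bar>t\<bar> < int k")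
  case True
  then show ?thesis by (auto simp: skip_index_def sletter_def remove_letter_def)
next
  case False
  then have "nat (t + 1) = Suc (nat t)" if "t > 0" using that by auto
  moreover have "nat (- t + 1) = Suc (nat (- t))" if "t < 0" using that by auto
  ultimately show ?thesis using False assms
    by (auto simp: skip_index_def sletter_def remove_letter_def sgn_if)
qed

lemma abs_skip_index_eq_iff: "1 \<le> k \<Longrightarrow> \<bar>skip_index k a\<bar> = \<bar>skip_index k b\<bar> \<longleftrightarrow> \<bar>a\<bar> = \<bar>b\<bar>"
  by (auto simp: abs_skip_index)

lemma abs_unskip_index_eq_iff:
  "1 \<le> k \<Longrightarrow> \<bar>a\<bar> \<noteq> int k \<Longrightarrow> \<bar>b\<bar> \<noteq> int k \<Longrightarrow>
    \<bar>unskip_index k a\<bar> = \<bar>unskip_index k b\<bar> \<longleftrightarrow> \<bar>a\<bar> = \<bar>b\<bar>"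
  by (auto simp: abs_unskip_index)

section \<open>Decomposition of the hyperoctahedral group\<close>

lemma signed_perms_nonzero: "\<sigma> \<in> signed_perms n \<Longrightarrow> i \<in> {1..n} \<Longrightarrow> \<sigma> i \<noteq> 0"
  and signed_perms_abs_le: "\<sigma> \<in> signed_perms n \<Longrightarrow> i \<in> {1..n} \<Longrightarrow> \<bar>\<sigma> i\<bar> \<le> int n"
  and signed_perms_outside: "\<sigma> \<in> signed_perms n \<Longrightarrow> i \<notin> {1..n} \<Longrightarrow> \<sigma> i = 0"
  and signed_perms_inj_on: "\<sigma> \<in> signed_perms n \<Longrightarrow> inj_on (\<lambda>i. \<bar>\<sigma> i\<bar>) {1..n}"
  by (simp_all add: signed_perms_def)

lemma signed_perms_abs_surj:
  assumes "\<sigma> \<in> signed_perms n" "k \<in> {1..n}"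
  obtains p where "p \<in> {1..n}" "\<bar>\<sigma> p\<bar> = int k"
proof -
  let ?f = "\<lambda>i. nat \<bar>\<sigma> i\<bar>"
  have "?f i \<in> {1..n}" if "i \<in> {1..n}" for i
    using signed_perms_nonzero[OF assms(1) that] signed_perms_abs_le[OF assms(1) that] by auto
  then have "?f ` {1..n} \<subseteq> {1..n}"
    by blast
  moreover have "inj_on ?f {1..n}"
  proof (rule inj_onI)
    fix i j assume "i \<in> {1..n}" "j \<in> {1..n}" "?f i = ?f j"
    then show "i = j"
      using inj_onD[OF signed_perms_inj_on[OF assms(1)]] by (simp add: eq_nat_nat_iff)
  qed
  ultimately have "?f ` {1..n} = {1..n}"
    by (simp add: endo_inj_surj)
  then have "k \<in> ?f ` {1..n}"
    using assms(2) by simp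
  then obtain p where "p \<in> {1..n}" "nat \<bar>\<sigma> p\<bar> = k"
    by blast
  then show ?thesis
    using that[of p] by simp
qed

lemma inj_on_abs_insert_at_skip_index:
  assumes \<tau>: "\<tau> \<in> signed_perms n" and k: "1 \<le> k"
    and p: "p \<in> {1..Suc n}" and s: "\<bar>s\<bar> = int k"
  shows "inj_on (\<lambda>i. \<bar>insert_at p s (skip_index k \<circ> \<tau>) i\<bar>) {1..Suc n}"
proof -
  let ?\<sigma> = "insert_at p s (skip_index k \<circ> \<tau>)"
  have "inj_on ((\<lambda>i. \<bar>?\<sigma> i\<bar>) \<circ> shift_from p) {1..n}"
  proof (rule inj_onI)
    fix i j assume ij: "i \<in> {1..n}" "j \<in> {1..n}"
      "((\<lambda>i. \<bar>?\<sigma> i\<bar>) \<circ> shift_from p) i = ((\<lambda>i. \<bar>?\<sigma> i\<bar>) \<circ> shift_from p) j"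
    then have "\<bar>\<tau> i\<bar> = \<bar>\<tau> j\<bar>"
      using abs_skip_index_eq_iff[OF k] by simp
    then show "i = j"
      using inj_onD[OF signed_perms_inj_on[OF \<tau>]] ij(1,2) by blast
  qed
  moreover have "\<bar>?\<sigma> p\<bar> \<notin> (\<lambda>i. \<bar>?\<sigma> i\<bar>) ` shift_from p ` {1..n}"
  proof
    assume "\<bar>?\<sigma> p\<bar> \<in> (\<lambda>i. \<bar>?\<sigma> i\<bar>) ` shift_from p ` {1..n}"
    then obtain j where "\<bar>?\<sigma> p\<bar> = \<bar>?\<sigma> (shift_from p j)\<bar>"
      by blast
    then have "\<bar>skip_index k (\<tau> j)\<bar> = int k"
      using s by simp
    then show False
      using abs_skip_index_neq[OF k] by blast
  qed
  ultimately show ?thesis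
    unfolding atLeastAtMost_Suc_shift_from[OF p] inj_on_insert by (blast intro: inj_on_imageI)
qed

lemma insert_at_skip_index_in_signed_perms:
  assumes \<tau>: "\<tau> \<in> signed_perms n" and k: "1 \<le> k" "k \<le> Suc n"
    and p: "p \<in> {1..Suc n}" and s: "\<bar>s\<bar> = int k"
  shows "insert_at p s (skip_index k \<circ> \<tau>) \<in> signed_perms (Suc n)"
proof -
  let ?\<sigma> = "insert_at p s (skip_index k \<circ> \<tau>)"
  note dom = atLeastAtMost_Suc_shift_from[OF p]
  have "?\<sigma> i \<noteq> 0 \<and> \<bar>?\<sigma> i\<bar> \<le> int (Suc n)" if i: "i \<in> {1..Suc n}" for i
  proof (cases "i = p")
    case False
    then obtain j where "j \<in> {1..n}" "i = shift_from p j"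
      using i unfolding dom by blast
    moreover have "\<bar>skip_index k (\<tau> j)\<bar> \<le> int (Suc n)"
      using signed_perms_abs_le[OF \<tau> \<open>j \<in> {1..n}\<close>] abs_skip_index[OF k(1)] k by auto
    ultimately show ?thesis
      using signed_perms_nonzero[OF \<tau>] by simp
  qed (use s k in simp)
  moreover have "inj_on (\<lambda>i. \<bar>?\<sigma> i\<bar>) {1..Suc n}"
    by (rule inj_on_abs_insert_at_skip_index[OF \<tau> k(1) p s])
  moreover have "?\<sigma> i = 0" if "i \<notin> {1..Suc n}" for i
  proof (cases "i = 0")
    case True
    then show ?thesis
      using p signed_perms_outside[OF \<tau>, of 0] by (simp add: insert_at_def)
  next
    case False
    then have "i - 1 \<notin> {1..n}" "\<not> i < p" "i \<noteq> p"
      using that p by auto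
    then show ?thesis
      using signed_perms_outside[OF \<tau>] by (simp add: insert_at_def)
  qed
  ultimately show ?thesis
    unfolding signed_perms_def by blast
qed

lemma unskip_index_comp_shift_from_in_signed_perms:
  assumes \<sigma>: "\<sigma> \<in> signed_perms (Suc n)" and k: "1 \<le> k" "k \<le> Suc n"
    and p: "p \<in> {1..Suc n}" and \<sigma>p: "\<bar>\<sigma> p\<bar> = int k"
  shows "unskip_index k \<circ> \<sigma> \<circ> shift_from p \<in> signed_perms n"
proof -
  let ?\<tau> = "unskip_index k \<circ> \<sigma> \<circ> shift_from p"
  have shift: "shift_from p i \<in> {1..Suc n}" if "i \<in> {1..n}" for i
    using that by (auto simp: shift_from_def)
  have not_k: "\<bar>\<sigma> (shift_from p i)\<bar> \<noteq> int k" if "i \<in> {1..n}" for i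
    using inj_onD[OF signed_perms_inj_on[OF \<sigma>] _ shift[OF that] p] \<sigma>p by auto
  have "?\<tau> i \<noteq> 0 \<and> \<bar>?\<tau> i\<bar> \<le> int n" if "i \<in> {1..n}" for i
  proof -
    let ?t = "\<sigma> (shift_from p i)"
    have "?t \<noteq> 0" "\<bar>?t\<bar> \<le> int (Suc n)" "\<bar>?t\<bar> \<noteq> int k"
      using not_k[OF that] signed_perms_nonzero[OF \<sigma> shift[OF that]]
        signed_perms_abs_le[OF \<sigma> shift[OF that]] by auto
    then show ?thesis
      using abs_unskip_index[OF k(1), of ?t] k by (auto split: if_splits)
  qed
  moreover have "inj_on (\<lambda>i. \<bar>?\<tau> i\<bar>) {1..n}"
  proof (rule inj_onI)
    fix i j assume ij: "i \<in> {1..n}" "j \<in> {1..n}" "\<bar>?\<tau> i\<bar> = \<bar>?\<tau> j\<bar>"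
    then have "\<bar>\<sigma> (shift_from p i)\<bar> = \<bar>\<sigma> (shift_from p j)\<bar>"
      using abs_unskip_index_eq_iff[OF k(1) not_k not_k] by simp
    then have "shift_from p i = shift_from p j"
      using inj_onD[OF signed_perms_inj_on[OF \<sigma>]] shift ij by blast
    then show "i = j"
      using inj_shift_from by (auto dest: injD)
  qed
  moreover have "?\<tau> i = 0" if "i \<notin> {1..n}" for i
    using that p signed_perms_outside[OF \<sigma>, of "shift_from p i"]
    by (auto simp: shift_from_def unskip_index_def)
  ultimately show ?thesis
    unfolding signed_perms_def by blast
qed

lemma unskip_insert_at_skip_index_shift_from [simp]:
  "unskip_index k \<circ> insert_at p s (skip_index k \<circ> \<tau>) \<circ> shift_from p = \<tau>"
  by (simp add: fun_eq_iff)

lemma insert_at_skip_index_inject: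
  assumes k: "1 \<le> k" and p: "p \<in> {1..Suc n}" "p' \<in> {1..Suc n}" and s: "\<bar>s\<bar> = int k"
    and \<sigma>: "insert_at p s (skip_index k \<circ> \<tau>) = insert_at p' s' (skip_index k \<circ> \<tau>')"
  shows "(p, s, \<tau>) = (p', s', \<tau>')"
proof -
  have "p = p'"
  proof (rule ccontr)
    assume "p \<noteq> p'"
    then obtain j where "p = shift_from p' j"
      using p(1) unfolding atLeastAtMost_Suc_shift_from[OF p(2)] by auto
    then have "\<bar>insert_at p' s' (skip_index k \<circ> \<tau>') p\<bar> \<noteq> int k"
      using abs_skip_index_neq[OF k] by simp
    then show False
      using fun_cong[OF \<sigma>, of p] s by simp
  qed
  then show ?thesis
    using fun_cong[OF \<sigma>, of p] arg_cong[OF \<sigma>, of "\<lambda>\<sigma>. unskip_index k \<circ> \<sigma> \<circ> shift_from p"] by simp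
qed

lemma bij_betw_insert_at_skip_index:
  assumes k: "1 \<le> k" "k \<le> Suc n"
  shows "bij_betw (\<lambda>(p, s, \<tau>). insert_at p s (skip_index k \<circ> \<tau>))
           ({1..Suc n} \<times> {int k, - int k} \<times> signed_perms n) (signed_perms (Suc n))"
proof (rule bij_betwI')
  fix x x' assume "x \<in> {1..Suc n} \<times> {int k, - int k} \<times> signed_perms n"
    and "x' \<in> {1..Suc n} \<times> {int k, - int k} \<times> signed_perms n"
  then obtain p s \<tau> p' s' \<tau>' where x: "x = (p, s, \<tau>)" "x' = (p', s', \<tau>')"
    and p: "p \<in> {1..Suc n}" "p' \<in> {1..Suc n}" and s: "\<bar>s\<bar> = int k"
    by auto
  show "(case x of (p, s, \<tau>) \<Rightarrow> insert_at p s (skip_index k \<circ> \<tau>))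
      = (case x' of (p, s, \<tau>) \<Rightarrow> insert_at p s (skip_index k \<circ> \<tau>)) \<longleftrightarrow> x = x'"
    unfolding x case_prod_conv
  proof
    assume "insert_at p s (skip_index k \<circ> \<tau>) = insert_at p' s' (skip_index k \<circ> \<tau>')"
    then show "(p, s, \<tau>) = (p', s', \<tau>')"
      by (rule insert_at_skip_index_inject[OF k(1) p s])
  qed simp
next
  fix x assume "x \<in> {1..Suc n} \<times> {int k, - int k} \<times> signed_perms n"
  then show "(case x of (p, s, \<tau>) \<Rightarrow> insert_at p s (skip_index k \<circ> \<tau>)) \<in> signed_perms (Suc n)"
    using insert_at_skip_index_in_signed_perms k by auto
next
  fix \<sigma> assume \<sigma>: "\<sigma> \<in> signed_perms (Suc n)"
  obtain p where p: "p \<in> {1..Suc n}" and \<sigma>p: "\<bar>\<sigma> p\<bar> = int k"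
    using signed_perms_abs_surj[OF \<sigma>] k by auto
  let ?\<tau> = "unskip_index k \<circ> \<sigma> \<circ> shift_from p"
  have "\<bar>\<sigma> (shift_from p i)\<bar> \<noteq> int k" for i
  proof (cases "shift_from p i \<in> {1..Suc n}")
    case True
    then show ?thesis
      using inj_onD[OF signed_perms_inj_on[OF \<sigma>] _ True p] \<sigma>p shift_from_neq by metis
  qed (use signed_perms_outside[OF \<sigma>] k in simp)
  then have "insert_at p (\<sigma> p) (skip_index k \<circ> ?\<tau>) = \<sigma>"
    using k by (intro insert_at_shift_from_eq) (simp add: skip_unskip_index)
  moreover have "(p, \<sigma> p, ?\<tau>) \<in> {1..Suc n} \<times> {int k, - int k} \<times> signed_perms n"
    using p \<sigma>p unskip_index_comp_shift_from_in_signed_perms[OF \<sigma> k p \<sigma>p] by auto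
  ultimately show "\<exists>x \<in> {1..Suc n} \<times> {int k, - int k} \<times> signed_perms n.
      \<sigma> = (case x of (p, s, \<tau>) \<Rightarrow> insert_at p s (skip_index k \<circ> \<tau>))"
    by force
qed

lemma sum_signed_perms_Suc:
  assumes "1 \<le> k" "k \<le> Suc n"
  shows "(\<Sum>\<sigma>\<in>signed_perms (Suc n). G \<sigma>)
       = (\<Sum>p=1..Suc n. \<Sum>s\<in>{int k, - int k}. \<Sum>\<tau>\<in>signed_perms n. G (insert_at p s (skip_index k \<circ> \<tau>)))"
  by (simp add: sum.reindex_bij_betw[OF bij_betw_insert_at_skip_index[OF assms], symmetric]
      sum.cartesian_product case_prod_beta')

lemma act_alphabet_insert_at_skip_index:
  assumes "1 \<le> k"
  shows "act_alphabet q (insert_at p s (skip_index k \<circ> \<tau>)) (w(k := z))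
       = insert_at p (sletter q (w(k := z)) s) (act_alphabet q \<tau> (remove_letter k w))"
  by (simp add: fun_eq_iff act_alphabet_def insert_at_def sletter_skip_index[OF assms])

lemma act_alphabet_nonzero:
  assumes "q \<noteq> 0" "\<tau> \<in> signed_perms n" "i \<in> {1..n}" "\<And>j. j \<in> {1..n} \<Longrightarrow> w j \<noteq> 0"
  shows "act_alphabet q \<tau> w i \<noteq> 0"
proof -
  have "nat \<bar>\<tau> i\<bar> \<in> {1..n}"
    using signed_perms_nonzero[OF assms(2,3)] signed_perms_abs_le[OF assms(2,3)] by auto
  then show ?thesis
    using assms(1,4) by (auto simp: act_alphabet_def sletter_def abs_if split: if_splits)
qed

section \<open>The product over pairs with an inserted letter\<close>

definition index_pairs :: "nat \<Rightarrow> (nat \<times> nat) set" where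
  "index_pairs n = {(i, j). 1 \<le> i \<and> i < j \<and> j \<le> n}"

lemma finite_index_pairs [simp]: "finite (index_pairs n)"
  by (rule finite_subset[of _ "{..n} \<times> {..n}"]) (auto simp: index_pairs_def)

lemma shift_from_less_iff [simp]: "shift_from p i < shift_from p j \<longleftrightarrow> i < j"
  by (simp add: shift_from_def)

lemma index_pairs_Suc_shift_from:
  assumes p: "p \<in> {1..Suc n}"
  shows "index_pairs (Suc n) = (\<lambda>i. (i, p)) ` {1..<p} \<union> (\<lambda>j. (p, Suc j)) ` {p..n}
           \<union> map_prod (shift_from p) (shift_from p) ` index_pairs n"
proof (intro equalityI subsetI)
  fix x assume x: "x \<in> index_pairs (Suc n)"
  then obtain i j where ij: "x = (i, j)" "1 \<le> i" "i < j" "j \<le> Suc n"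
    by (auto simp: index_pairs_def)
  consider "j = p" | "i = p" | "i \<noteq> p" "j \<noteq> p"
    by blast
  then show "x \<in> (\<lambda>i. (i, p)) ` {1..<p} \<union> (\<lambda>j. (p, Suc j)) ` {p..n}
           \<union> map_prod (shift_from p) (shift_from p) ` index_pairs n"
  proof cases
    case 3
    have "i \<in> {1..Suc n}" "j \<in> {1..Suc n}"
      using ij by auto
    then have "i \<in> shift_from p ` {1..n}" "j \<in> shift_from p ` {1..n}"
      using 3 unfolding atLeastAtMost_Suc_shift_from[OF p] by auto
    then obtain i' j' where "i = shift_from p i'" "j = shift_from p j'" "i' \<in> {1..n}" "j' \<in> {1..n}"
      by blast
    then show ?thesis
      using ij by (auto simp: index_pairs_def)
  next
    case 2
    then have "x \<in> (\<lambda>j. (p, Suc j)) ` {p..n}"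
      using ij by (intro image_eqI[of _ _ "j - 1"]) auto
    then show ?thesis
      by blast
  qed (use ij in auto)
qed (use p in \<open>auto simp: index_pairs_def shift_from_def\<close>)

lemma prod_index_pairs_insert_at:
  assumes p: "p \<in> {1..Suc n}"
  shows "(\<Prod>(i, j) \<in> index_pairs (Suc n). g (insert_at p x u i) (insert_at p x u j))
       = (\<Prod>i=1..<p. g (u i) x) * (\<Prod>j=p..n. g x (u j)) * (\<Prod>(i, j) \<in> index_pairs n. g (u i) (u j))"
proof -
  let ?h = "\<lambda>(i, j). g (insert_at p x u i) (insert_at p x u j)"
  have disjoint: "(\<lambda>i. (i, p)) ` {1..<p} \<inter> (\<lambda>j. (p, Suc j)) ` {p..n} = {}"
    "((\<lambda>i. (i, p)) ` {1..<p} \<union> (\<lambda>j. (p, Suc j)) ` {p..n})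
       \<inter> map_prod (shift_from p) (shift_from p) ` index_pairs n = {}"
    by (auto simp: shift_from_def split: if_splits)
  have "prod ?h ((\<lambda>i. (i, p)) ` {1..<p}) = (\<Prod>i=1..<p. g (u i) x)"
    by (subst prod.reindex) (auto simp: inj_on_def insert_at_def)
  moreover have "prod ?h ((\<lambda>j. (p, Suc j)) ` {p..n}) = (\<Prod>j=p..n. g x (u j))"
    by (subst prod.reindex) (auto simp: inj_on_def insert_at_def intro!: prod.cong)
  moreover have "prod ?h (map_prod (shift_from p) (shift_from p) ` index_pairs n)
      = (\<Prod>(i, j) \<in> index_pairs n. g (u i) (u j))"
    by (subst prod.reindex) (auto simp: inj_on_def inj_shift_from[THEN injD] intro!: prod.cong)
  ultimately show ?thesis
    unfolding index_pairs_Suc_shift_from[OF p] using disjoint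
    by (simp add: prod.union_disjoint)
qed

definition pair_factor :: "real \<Rightarrow> complex \<Rightarrow> complex \<Rightarrow> complex" where
  "pair_factor q a b = (a - of_real q * b) / (a - b) * ((1 - a * b) / (1 - of_real q * a * b))"

lemma Fterm_eq:
  "Fterm q \<alpha> M y n u
     = (\<Prod>(i, j) \<in> index_pairs n. pair_factor q (u i) (u j)) * (\<Prod>i=1..M. phi q \<alpha> (y i) (u i))"
  by (simp add: Fterm_def index_pairs_def pair_factor_def)

section \<open>Limits as a letter tends to zero or infinity\<close>

lemma tendsto_at_infinity_reciprocal:
  fixes f g :: "'a::real_normed_field \<Rightarrow> 'a"
  assumes "\<And>u. u \<noteq> 0 \<Longrightarrow> f (1 / u) = g u" and "isCont g 0"
  shows "(f \<longlongrightarrow> g 0) at_infinity"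
proof (rule lim_zero_infinity)
  have "\<forall>\<^sub>F u in at 0. g u = f (1 / u)"
    using assms(1) by (simp add: eventually_at_filter)
  then show "((\<lambda>u. f (1 / u)) \<longlongrightarrow> g 0) (at 0)"
    using assms(2) unfolding isCont_def by (rule Lim_transform_eventually[rotated])
qed

lemma filterlim_reciprocal_scaled_at_infinity:
  fixes c :: "'a::real_normed_field"
  assumes "c \<noteq> 0"
  shows "filterlim (\<lambda>z. 1 / (c * z)) at_infinity (at 0)"
proof -
  have "filterlim (\<lambda>z. c * z) (at 0) (at 0)"
    using assms by (auto simp: filterlim_at eventually_at_filter intro!: tendsto_eq_intros)
  then show ?thesis
    by (simp add: filterlim_inverse_at_iff[symmetric] inverse_eq_divide)
qed

lemma pair_factor_tendsto_0_right:
  assumes "a \<noteq> 0"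
  shows "(pair_factor q a \<longlongrightarrow> 1) (at 0)"
proof -
  have "(pair_factor q a \<longlongrightarrow> pair_factor q a 0) (at 0)"
    unfolding pair_factor_def using assms by (intro tendsto_intros) auto
  then show ?thesis
    using assms by (simp add: pair_factor_def)
qed

lemma pair_factor_tendsto_0_left:
  assumes "a \<noteq> 0"
  shows "((\<lambda>x. pair_factor q x a) \<longlongrightarrow> of_real q) (at 0)"
proof -
  have "((\<lambda>x. pair_factor q x a) \<longlongrightarrow> pair_factor q 0 a) (at 0)"
    unfolding pair_factor_def using assms by (intro tendsto_intros) auto
  then show ?thesis
    using assms by (simp add: pair_factor_def)
qed

lemma phi_tendsto_0: "(phi q \<alpha> y \<longlongrightarrow> 0) (at 0)"
proof -
  have "(phi q \<alpha> y \<longlongrightarrow> phi q \<alpha> y 0) (at 0)"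
    unfolding phi_def by (intro tendsto_intros) auto
  then show ?thesis
    by (simp add: phi_def)
qed

lemma pair_factor_reciprocal_right:
  assumes "u \<noteq> 0"
  shows "pair_factor q a (1 / u)
       = (a * u - of_real q) / (a * u - 1) * ((u - a) / (u - of_real q * a))"
  using mult_divide_mult_cancel_right[OF assms, of "a - of_real q * (1 / u)" "a - 1 / u"]
    mult_divide_mult_cancel_right[OF assms, of "1 - a * (1 / u)" "1 - of_real q * a * (1 / u)"] assms
  unfolding pair_factor_def by (simp add: algebra_simps)

lemma pair_factor_reciprocal_left:
  assumes "u \<noteq> 0"
  shows "pair_factor q (1 / u) a
       = (1 - of_real q * a * u) / (1 - a * u) * ((u - a) / (u - of_real q * a))"
  using mult_divide_mult_cancel_right[OF assms, of "1 / u - of_real q * a" "1 / u - a"]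
    mult_divide_mult_cancel_right[OF assms, of "1 - 1 / u * a" "1 - of_real q * (1 / u) * a"] assms
  unfolding pair_factor_def by (simp add: algebra_simps)

lemma phi_reciprocal:
  assumes "u \<noteq> 0"
  shows "phi q \<alpha> y (1 / u)
       = ((1 - of_real q - of_real \<alpha>) * u\<^sup>2 + of_real \<alpha> * u) / (u\<^sup>2 - of_real q)
         * ((1 - of_real q) / (u - 1)) * ((u - of_real q) / (u - 1)) powi (y - 1)"
  using mult_divide_mult_cancel_right[OF power_not_zero[OF assms, of 2],
      of "1 - of_real q - of_real \<alpha> + of_real \<alpha> * (1 / u)" "1 - of_real q * (1 / u)\<^sup>2"]
    mult_divide_mult_cancel_right[OF assms, of "(1 - of_real q) * (1 / u)" "1 - 1 / u"]
    mult_divide_mult_cancel_right[OF assms, of "1 - of_real q * (1 / u)" "1 - 1 / u"] assms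
  unfolding phi_def by (simp add: algebra_simps power2_eq_square)

lemma pair_factor_tendsto_infinity_right:
  assumes "a \<noteq> 0" "q \<noteq> 0"
  shows "(pair_factor q a \<longlongrightarrow> 1) at_infinity"
proof -
  let ?f = "pair_factor q a"
  let ?g = "\<lambda>u. (a * u - of_real q) / (a * u - 1) * ((u - a) / (u - of_real q * a))"
  have "isCont ?g 0"
    using assms by (intro continuous_intros) auto
  then have "(?f \<longlongrightarrow> ?g 0) at_infinity"
    by (rule tendsto_at_infinity_reciprocal[rotated]) (rule pair_factor_reciprocal_right)
  then show ?thesis
    using assms by simp
qed

lemma pair_factor_tendsto_infinity_left:
  assumes "a \<noteq> 0" "q \<noteq> 0"
  shows "((\<lambda>x. pair_factor q x a) \<longlongrightarrow> 1 / of_real q) at_infinity"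
proof -
  let ?f = "\<lambda>x. pair_factor q x a"
  let ?g = "\<lambda>u. (1 - of_real q * a * u) / (1 - a * u) * ((u - a) / (u - of_real q * a))"
  have "isCont ?g 0"
    using assms by (intro continuous_intros) auto
  then have "(?f \<longlongrightarrow> ?g 0) at_infinity"
    by (rule tendsto_at_infinity_reciprocal[rotated]) (rule pair_factor_reciprocal_left)
  then show ?thesis
    using assms by simp
qed

lemma phi_tendsto_infinity:
  assumes "q \<noteq> 0"
  shows "(phi q \<alpha> y \<longlongrightarrow> 0) at_infinity"
proof -
  let ?f = "phi q \<alpha> y"
  let ?g = "\<lambda>u::complex. ((1 - of_real q - of_real \<alpha>) * u\<^sup>2 + of_real \<alpha> * u) / (u\<^sup>2 - of_real q)
         * ((1 - of_real q) / (u - 1)) * ((u - of_real q) / (u - 1)) powi (y - 1)"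
  have "isCont ?g 0"
    using assms by (intro continuous_intros) auto
  then have "(?f \<longlongrightarrow> ?g 0) at_infinity"
    by (rule tendsto_at_infinity_reciprocal[rotated]) (rule phi_reciprocal)
  then show ?thesis
    using assms by simp
qed

lemma prod_insert_at_split:
  assumes "finite A" "p \<in> A"
  shows "(\<Prod>i\<in>A. f i (insert_at p x u i)) = f p x * (\<Prod>i\<in>A - {p}. f i (insert_at p x' u i))"
proof -
  have "(\<Prod>i\<in>A - {p}. f i (insert_at p x u i)) = (\<Prod>i\<in>A - {p}. f i (insert_at p x' u i))"
    by (intro prod.cong refl arg_cong[where f = "f _"] insert_at_neq) simp
  then show ?thesis
    using assms by (simp add: prod.remove)
qed

lemma prod_insert_at_below:
  assumes "M < p"
  shows "(\<Prod>i=1..M. f i (insert_at p x u i)) = (\<Prod>i=1..M. f i (u i))"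
  using assms by (intro prod.cong) (auto simp: insert_at_def)

lemma tendsto_Fterm_insert_at:
  fixes X :: "'a \<Rightarrow> complex"
  assumes X: "filterlim X G F"
    and v: "\<And>i. i \<in> {1..n} \<Longrightarrow> v i \<noteq> 0" and p: "p \<in> {1..Suc n}"
    and right: "\<And>a. a \<noteq> 0 \<Longrightarrow> (pair_factor q a \<longlongrightarrow> 1) G"
    and left: "\<And>a. a \<noteq> 0 \<Longrightarrow> ((\<lambda>x. pair_factor q x a) \<longlongrightarrow> c) G"
    and phi: "\<And>t. (phi q \<alpha> t \<longlongrightarrow> 0) G"
  shows "((\<lambda>z. Fterm q \<alpha> M y (Suc n) (insert_at p (X z) v))
           \<longlongrightarrow> (if p \<le> M then 0 else c ^ (Suc n - p) * Fterm q \<alpha> M y n v)) F"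
proof -
  define A where "A z = (\<Prod>i=1..<p. pair_factor q (v i) (X z)) * (\<Prod>j=p..n. pair_factor q (X z) (v j))"
    for z
  define P where "P = (\<Prod>(i, j) \<in> index_pairs n. pair_factor q (v i) (v j))"
  have "(A \<longlongrightarrow> (\<Prod>i=1..<p. 1) * (\<Prod>j=p..n. c)) F"
    unfolding A_def using p v
    by (intro tendsto_mult tendsto_prod filterlim_compose[OF right X] filterlim_compose[OF left X]) auto
  then have A: "(A \<longlongrightarrow> c ^ (Suc n - p)) F"
    by simp
  have Fterm: "Fterm q \<alpha> M y (Suc n) (insert_at p (X z) v)
      = A z * P * (\<Prod>i=1..M. phi q \<alpha> (y i) (insert_at p (X z) v i))" for z
    unfolding Fterm_eq prod_index_pairs_insert_at[OF p] A_def P_def ..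
  show ?thesis
  proof (cases "p \<le> M")
    case True
    define C where "C = (\<Prod>i\<in>{1..M} - {p}. phi q \<alpha> (y i) (insert_at p 0 v i))"
    have "(\<Prod>i=1..M. phi q \<alpha> (y i) (insert_at p (X z) v i)) = phi q \<alpha> (y p) (X z) * C" for z
      using True p unfolding C_def by (intro prod_insert_at_split) auto
    moreover have "((\<lambda>z. A z * P * (phi q \<alpha> (y p) (X z) * C)) \<longlongrightarrow> c ^ (Suc n - p) * P * (0 * C)) F"
      by (intro tendsto_mult tendsto_const A filterlim_compose[OF phi X])
    ultimately show ?thesis
      using True by (simp add: Fterm)
  next
    case False
    then have "M < p"
      by simp
    then have "Fterm q \<alpha> M y (Suc n) (insert_at p (X z) v) = A z * Fterm q \<alpha> M y n v" for z
      unfolding Fterm Fterm_eq[of q \<alpha> M y n v] P_def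
        prod_insert_at_below[OF \<open>M < p\<close>, where f = "\<lambda>i. phi q \<alpha> (y i)"]
      by (simp add: mult.assoc)
    then show ?thesis
      using False by (simp add: tendsto_mult_right[OF A])
  qed
qed

lemma tendsto_Fterm_insert_sletter:
  assumes q: "q > 0" and k: "1 \<le> k" and s: "s \<in> {int k, - int k}"
    and v: "\<And>i. i \<in> {1..n} \<Longrightarrow> v i \<noteq> 0" and p: "p \<in> {1..Suc n}"
  shows "((\<lambda>z. Fterm q \<alpha> M y (Suc n) (insert_at p (sletter q (w(k := z)) s) v))
           \<longlongrightarrow> (if p \<le> M then 0
                else (if s > 0 then of_real q else 1 / of_real q) ^ (Suc n - p) * Fterm q \<alpha> M y n v))
         (at 0)"
proof (cases "s > 0")
  case True
  then have letter: "sletter q (w(k := z)) s = z" for z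
    using s by (auto simp: sletter_def)
  have "((\<lambda>z. Fterm q \<alpha> M y (Suc n) (insert_at p z v))
      \<longlongrightarrow> (if p \<le> M then 0 else of_real q ^ (Suc n - p) * Fterm q \<alpha> M y n v)) (at 0)"
    by (rule tendsto_Fterm_insert_at[OF filterlim_ident v p pair_factor_tendsto_0_right
        pair_factor_tendsto_0_left phi_tendsto_0])
  then show ?thesis
    by (simp only: letter True if_True)
next
  case False
  then have letter: "sletter q (w(k := z)) s = 1 / (of_real q * z)" for z
    using s k by (auto simp: sletter_def)
  have q0: "q \<noteq> 0"
    using q by simp
  have "((\<lambda>z. Fterm q \<alpha> M y (Suc n) (insert_at p (1 / (of_real q * z)) v))
      \<longlongrightarrow> (if p \<le> M then 0 else (1 / of_real q) ^ (Suc n - p) * Fterm q \<alpha> M y n v)) (at 0)"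
    using q0 by (intro tendsto_Fterm_insert_at[OF filterlim_reciprocal_scaled_at_infinity v p]
        pair_factor_tendsto_infinity_right pair_factor_tendsto_infinity_left phi_tendsto_infinity) auto
  then show ?thesis
    by (simp only: letter False if_False)
qed

section \<open>The normalising constants\<close>

lemma sum_if_le_reflect:
  fixes f :: "nat \<Rightarrow> 'a::comm_monoid_add"
  shows "(\<Sum>p=1..N. if p \<le> M then 0 else f (N - p)) = (\<Sum>m<N - M. f m)"
proof -
  have "(\<Sum>p=1..N. if p \<le> M then 0 else f (N - p)) = (\<Sum>p\<in>{Suc M..N}. f (N - p))"
    by (subst sum.If_cases) (auto intro!: sum.cong)
  also have "\<dots> = (\<Sum>m<N - M. f m)"
    by (rule sum.reindex_bij_witness[where i = "\<lambda>m. N - m" and j = "\<lambda>p. N - p"]) auto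
  finally show ?thesis .
qed

lemma sum_power_plus_inverse_power:
  fixes q :: real
  assumes "q \<noteq> 0"
  shows "(\<Sum>m<Suc K. q ^ m + (1 / q) ^ m) * (q ^ K * (1 - q)) = (1 - q ^ Suc K) * (1 + q ^ K)"
proof (induction K)
  case (Suc K)
  have inverse: "(1 / q) ^ Suc K * q ^ Suc K = 1"
    using assms by (simp add: power_one_over)
  have "(\<Sum>m<Suc (Suc K). q ^ m + (1 / q) ^ m) * (q ^ Suc K * (1 - q))
      = q * ((\<Sum>m<Suc K. q ^ m + (1 / q) ^ m) * (q ^ K * (1 - q)))
        + (q ^ Suc K * q ^ Suc K + (1 / q) ^ Suc K * q ^ Suc K) * (1 - q)"
    by (simp add: algebra_simps)
  then show ?case
    unfolding inverse Suc.IH by (simp add: algebra_simps flip: power_add)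
qed simp

lemma Vq_Suc:
  fixes q :: real
  assumes "q > 0" "q \<noteq> 1"
  shows "Vq q (Suc K) * (\<Sum>m<Suc K. q ^ m + (1 / q) ^ m) = Vq q K"
proof -
  define S where "S = (\<Sum>m<Suc K. q ^ m + (1 / q) ^ m)"
  define F where "F = (1 - q ^ Suc K) * (1 + q ^ K)"
  have "q ^ Suc K \<noteq> 1"
    using assms power_eq_iff_eq_base[of "Suc K" q 1] by simp
  moreover have "1 + q ^ K > 0"
    using assms by (simp add: add_pos_pos)
  ultimately have "F \<noteq> 0"
    unfolding F_def by simp
  have D: "(\<Prod>i=1..Suc K. (1 - q ^ i) * (1 + q ^ (i - 1)))
      = (\<Prod>i=1..K. (1 - q ^ i) * (1 + q ^ (i - 1))) * F"
    by (simp add: F_def prod.nat_ivl_Suc')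
  have choose: "Suc K choose 2 = (K choose 2) + K"
    by (simp add: numeral_2_eq_2)
  have "Vq q (Suc K) * S = Vq q K * (S * (q ^ K * (1 - q)) / F)"
    unfolding Vq_def D choose by (simp only: power_add power_Suc divide_inverse inverse_mult_distrib ac_simps)
  also have "S * (q ^ K * (1 - q)) = F"
    unfolding S_def F_def by (rule sum_power_plus_inverse_power) (use assms in simp)
  finally show ?thesis
    using \<open>F \<noteq> 0\<close> unfolding S_def by simp
qed

lemma tendsto_sum_Fterm_remove_letter:
  assumes q: "q > 0" and k: "1 \<le> k" "k \<le> Suc n"
    and w: "\<And>i. i \<in> {1..n} \<Longrightarrow> remove_letter k w i \<noteq> 0"
  shows "((\<lambda>z. \<Sum>\<sigma>\<in>signed_perms (Suc n). Fterm q \<alpha> M y (Suc n) (act_alphabet q \<sigma> (w(k := z))))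
           \<longlongrightarrow> of_real (\<Sum>m<Suc n - M. q ^ m + (1 / q) ^ m)
               * (\<Sum>\<tau>\<in>signed_perms n. Fterm q \<alpha> M y n (act_alphabet q \<tau> (remove_letter k w)))) (at 0)"
proof -
  define v where "v \<tau> = act_alphabet q \<tau> (remove_letter k w)" for \<tau>
  define S where "S = (\<Sum>\<tau>\<in>signed_perms n. Fterm q \<alpha> M y n (v \<tau>))"
  define c :: "int \<Rightarrow> complex" where "c s = (if s > 0 then of_real q else 1 / of_real q)" for s
  define L where "L p s \<tau> = (if p \<le> M then 0 else c s ^ (Suc n - p) * Fterm q \<alpha> M y n (v \<tau>))"
    for p s \<tau>
  have "((\<lambda>z. \<Sum>\<sigma>\<in>signed_perms (Suc n). Fterm q \<alpha> M y (Suc n) (act_alphabet q \<sigma> (w(k := z))))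
      \<longlongrightarrow> (\<Sum>p=1..Suc n. \<Sum>s\<in>{int k, - int k}. \<Sum>\<tau>\<in>signed_perms n. L p s \<tau>)) (at 0)"
    unfolding sum_signed_perms_Suc[OF k] act_alphabet_insert_at_skip_index[OF k(1)] L_def c_def v_def
    using q k w by (intro tendsto_sum tendsto_Fterm_insert_sletter act_alphabet_nonzero) auto
  also have "(\<Sum>p=1..Suc n. \<Sum>s\<in>{int k, - int k}. \<Sum>\<tau>\<in>signed_perms n. L p s \<tau>)
      = (\<Sum>p=1..Suc n. if p \<le> M then 0 else of_real (q ^ (Suc n - p) + (1 / q) ^ (Suc n - p))) * S"
  proof -
    have inner: "(\<Sum>s\<in>{int k, - int k}. \<Sum>\<tau>\<in>signed_perms n. L p s \<tau>)
        = (if p \<le> M then 0 else of_real (q ^ (Suc n - p) + (1 / q) ^ (Suc n - p))) * S" for p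
      using k by (cases "p \<le> M") (simp_all add: L_def c_def S_def sum_distrib_left distrib_right sum.distrib)
    show ?thesis
      by (simp only: inner sum_distrib_right)
  qed
  also have "\<dots> = of_real (\<Sum>m<Suc n - M. q ^ m + (1 / q) ^ m) * S"
    by (simp only: sum_if_le_reflect[where f = "\<lambda>m. of_real (q ^ m + (1 / q) ^ m)"] of_real_sum)
  finally show ?thesis
    unfolding S_def v_def .
qed

theorem proposition6p3:
  fixes q \<alpha> :: real and M N k :: nat and y :: "nat \<Rightarrow> int" and w :: "nat \<Rightarrow> complex"
  assumes "q > 0" and "q \<noteq> 1" and "\<alpha> \<ge> 0"
    and "1 \<le> M" and "M \<le> N"
    and "k \<in> {1..N}"
    and "generic_alphabet q (N - 1) (remove_letter k w)"
  shows "((\<lambda>z. Fy q \<alpha> M y N (w(k := z)))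
           \<longlongrightarrow> of_real \<alpha> * Fy q \<alpha> M y (N - 1) (remove_letter k w)) (at 0)"
proof -
  obtain n where N: "N = Suc n"
    using assms(6) by (cases N) auto
  define V where "V K = Vq q K * \<alpha> ^ K" for K
  define C where "C = (if n < M then 0 else V (n - M))"
  have "remove_letter k w i \<noteq> 0" if "i \<in> {1..n}" for i
    using assms(7) that N by (simp add: generic_alphabet_def)
  then have lim: "((\<lambda>z. \<Sum>\<sigma>\<in>signed_perms N. Fterm q \<alpha> M y N (act_alphabet q \<sigma> (w(k := z))))
      \<longlongrightarrow> of_real (\<Sum>m<N - M. q ^ m + (1 / q) ^ m)
          * (\<Sum>\<tau>\<in>signed_perms n. Fterm q \<alpha> M y n (act_alphabet q \<tau> (remove_letter k w)))) (at 0)"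
    using tendsto_sum_Fterm_remove_letter[OF assms(1)] assms(6) N by simp
  have const: "V (N - M) * (\<Sum>m<N - M. q ^ m + (1 / q) ^ m) = \<alpha> * C"
  proof (cases "n < M")
    case False
    then have "N - M = Suc (n - M)"
      using N by simp
    then show ?thesis
      using False Vq_Suc[OF assms(1,2), of "n - M"] by (simp add: V_def C_def ac_simps)
  qed (use N assms(5) in \<open>simp add: C_def\<close>)
  have "Fy q \<alpha> M y N u = of_real (V (N - M)) * (\<Sum>\<sigma>\<in>signed_perms N. Fterm q \<alpha> M y N (act_alphabet q \<sigma> u))"
    and "Fy q \<alpha> M y (N - 1) u = of_real C * (\<Sum>\<tau>\<in>signed_perms n. Fterm q \<alpha> M y n (act_alphabet q \<tau> u))"
    for u using assms(5) N by (simp_all add: Fy_def V_def C_def)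
  then show ?thesis
    using tendsto_mult_left[OF lim, of "of_real (V (N - M))"]
    by (simp only: mult.assoc[symmetric] of_real_mult[symmetric] const)
qed

end
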